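(* Let $m=2k$ with $k\in\mathbb{N}$ and $\beta\in(1,k+1)$. There exists $\epsilon_0(\beta)>0$ such that: if $x\in[\frac{1}{\beta},\frac{1}{\beta}+\epsilon_0(\beta))$ then $T_{\beta,0}(x)\in[\frac{1}{\beta}+\epsilon_0(\beta),\frac{(m-1)\beta+1}{\beta(\beta-1)}-\epsilon_0(\beta)]$; and if $x\in(\frac{(m-1)\beta+1}{\beta(\beta-1)}-\epsilon_0(\beta),\frac{(m-1)\beta+1}{\beta(\beta-1)}]$ then $T_{\beta,m}(x)\in[\frac{1}{\beta}+\epsilon_0(\beta),\frac{(m-1)\beta+1}{\beta(\beta-1)}-\epsilon_0(\beta)]$.
   Context: $T_{\beta,i}(x)=\beta x-i$ for $i\in\{0,\ldots,m\}$. *)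

theory Defs
  imports Complex_Main
begin

definition T :: "real \<Rightarrow> nat \<Rightarrow> real \<Rightarrow> real" where
  "T \<beta> i x = \<beta> * x - real i"

end

theory Submission
  imports Defs
begin

text \<open>Both branches are affine with slope \<open>\<beta>\<close>, and they send the endpoints of
  \<open>[1/\<beta>, B]\<close>, \<open>B = ((m-1)\<beta>+1)/(\<beta>(\<beta>-1))\<close>, to \<open>T \<beta> 0 (1/\<beta>) = 1\<close> and
  \<open>T \<beta> m B = (m+1-\<beta>)/(\<beta>-1)\<close>. As soon as \<open>\<beta> < m\<close> (implied by \<open>\<beta> < k+1\<close>) both
  images lie strictly inside \<open>(1/\<beta>, B)\<close>, so a small neighbourhood of each endpoint
  is mapped into the interval shrunk by any sufficiently small margin.\<close>

lemma eventually_affine_image_in_shrunk_interval: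
  fixes \<beta> i p a b :: real
  assumes "0 < \<beta>" "a < \<beta> * p - i" "\<beta> * p - i < b"
  shows "\<forall>\<^sub>F \<epsilon> in at_right 0. \<forall>x. \<bar>x - p\<bar> < \<epsilon> \<longrightarrow> \<beta> * x - i \<in> {a + \<epsilon> .. b - \<epsilon>}"
proof -
  define y where "y = \<beta> * p - i"
  define d where "d = min (y - a) (b - y) / (\<beta> + 1)"
  have "d > 0" using assms unfolding d_def y_def by simp
  moreover have "\<forall>x. \<bar>x - p\<bar> < \<epsilon> \<longrightarrow> \<beta> * x - i \<in> {a + \<epsilon> .. b - \<epsilon>}"
    if "\<epsilon> < d" for \<epsilon>
  proof (intro allI impI)
    fix x assume "\<bar>x - p\<bar> < \<epsilon>"
    then have "\<bar>(\<beta> * x - i) - y\<bar> \<le> \<beta> * \<epsilon>"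
      using \<open>0 < \<beta>\<close> by (simp add: y_def abs_mult flip: right_diff_distrib)
    moreover have "\<epsilon> * (\<beta> + 1) \<le> y - a" "\<epsilon> * (\<beta> + 1) \<le> b - y"
      using \<open>\<epsilon> < d\<close> \<open>0 < \<beta>\<close> by (simp_all add: d_def field_simps)
    ultimately show "\<beta> * x - i \<in> {a + \<epsilon> .. b - \<epsilon>}"
      by (auto simp: algebra_simps abs_le_iff)
  qed
  ultimately show ?thesis
    unfolding eventually_at_right_field by (intro exI[of _ d]) auto
qed

definition right_endpoint :: "real \<Rightarrow> nat \<Rightarrow> real" where
  "right_endpoint \<beta> m = ((real m - 1) * \<beta> + 1) / (\<beta> * (\<beta> - 1))"

lemma T_right_endpoint:
  assumes "1 < \<beta>"
  shows "T \<beta> m (right_endpoint \<beta> m) = (real m + 1 - \<beta>) / (\<beta> - 1)"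
  using assms by (simp add: T_def right_endpoint_def field_simps)

lemma one_in_branch_interval:
  assumes "1 < \<beta>" "\<beta> < real m"
  shows "1 / \<beta> < 1" "1 < right_endpoint \<beta> m"
proof -
  have "\<beta> * \<beta> < \<beta> * real m" using assms by simp
  then have "\<beta> * \<beta> < 1 + \<beta> * real m" by linarith
  then show "1 / \<beta> < 1" "1 < right_endpoint \<beta> m"
    using assms by (simp_all add: right_endpoint_def field_simps)
qed

lemma T_right_endpoint_in_branch_interval:
  assumes "1 < \<beta>" "\<beta> < real m"
  shows "1 / \<beta> < (real m + 1 - \<beta>) / (\<beta> - 1)"
    and "(real m + 1 - \<beta>) / (\<beta> - 1) < right_endpoint \<beta> m"
proof -
  have "\<beta> * \<beta> < \<beta> * real m" using assms by simp
  then have "\<beta> * \<beta> < 1 + \<beta> * real m" by linarith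
  then show "1 / \<beta> < (real m + 1 - \<beta>) / (\<beta> - 1)"
    using assms by (simp add: field_simps)
  have "0 < (\<beta> - 1) * (\<beta> - 1)" using assms by simp
  then have "\<beta> * (real m + 1 - \<beta>) < (real m - 1) * \<beta> + 1"
    by (simp add: algebra_simps)
  then have "\<beta> * (real m + 1 - \<beta>) / (\<beta> * (\<beta> - 1)) < right_endpoint \<beta> m"
    unfolding right_endpoint_def using assms by (intro divide_strict_right_mono) auto
  then show "(real m + 1 - \<beta>) / (\<beta> - 1) < right_endpoint \<beta> m"
    using assms by simp
qed

theorem lemma5p3:
  fixes k m :: nat and \<beta> :: real
  assumes "m = 2 * k" and "1 < \<beta>" and "\<beta> < real k + 1"
  shows "\<exists>\<epsilon>0 > 0.
    (\<forall>x. 1 / \<beta> \<le> x \<and> x < 1 / \<beta> + \<epsilon>0 \<longrightarrow>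
       T \<beta> 0 x \<in> {1 / \<beta> + \<epsilon>0 .. ((real m - 1) * \<beta> + 1) / (\<beta> * (\<beta> - 1)) - \<epsilon>0}) \<and>
    (\<forall>x. ((real m - 1) * \<beta> + 1) / (\<beta> * (\<beta> - 1)) - \<epsilon>0 < x \<and>
         x \<le> ((real m - 1) * \<beta> + 1) / (\<beta> * (\<beta> - 1)) \<longrightarrow>
       T \<beta> m x \<in> {1 / \<beta> + \<epsilon>0 .. ((real m - 1) * \<beta> + 1) / (\<beta> * (\<beta> - 1)) - \<epsilon>0})"
proof -
  define B where "B = right_endpoint \<beta> m"
  have "k \<ge> 1" using assms by (cases k) auto
  then have "\<beta> < real m" using assms by linarith
  note inside = one_in_branch_interval[OF \<open>1 < \<beta>\<close> this]
    T_right_endpoint_in_branch_interval[OF \<open>1 < \<beta>\<close> this]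
  have "\<forall>\<^sub>F \<epsilon> in at_right 0. 0 < \<epsilon> \<and>
      (\<forall>x. \<bar>x - 1 / \<beta>\<bar> < \<epsilon> \<longrightarrow> \<beta> * x - 0 \<in> {1 / \<beta> + \<epsilon> .. B - \<epsilon>}) \<and>
      (\<forall>x. \<bar>x - B\<bar> < \<epsilon> \<longrightarrow> \<beta> * x - m \<in> {1 / \<beta> + \<epsilon> .. B - \<epsilon>})"
    using inside T_right_endpoint[OF \<open>1 < \<beta>\<close>, of m] \<open>1 < \<beta>\<close> unfolding B_def
    by (intro eventually_conj eventually_at_right_less eventually_affine_image_in_shrunk_interval)
      (simp_all add: T_def)
  then obtain \<epsilon> where "\<epsilon> > 0"
    "\<And>x. \<bar>x - 1 / \<beta>\<bar> < \<epsilon> \<Longrightarrow> \<beta> * x \<in> {1 / \<beta> + \<epsilon> .. B - \<epsilon>}"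
    "\<And>x. \<bar>x - B\<bar> < \<epsilon> \<Longrightarrow> \<beta> * x - m \<in> {1 / \<beta> + \<epsilon> .. B - \<epsilon>}"
    using eventually_happens'[OF trivial_limit_at_right_real] by force
  then show ?thesis
    unfolding B_def right_endpoint_def T_def
    by (intro exI[of _ \<epsilon>]) (auto simp: abs_less_iff)
qed

end
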